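(* Let $(S,\mathcal{S})$ be a measurable space and let $\mathcal{E}\subseteq\mathcal{P}(S)$ be a $\cap$-stable collection with $\sigma(\mathcal{E})=\mathcal{S}$, $\emptyset\in\mathcal{E}$ and $\mathcal{E}\subseteq (\mathcal{E}_{int})_{\sigma}$. If $\pi$ is a constructive cr-set, then for every $A\in\mathcal{S}$ there exist $K\in (\mathcal{E}_{int})_{\sigma}$ and $L\in(\mathcal{E}_{ext})_{\delta}$ with $K\subseteq A\subseteq L$ and $T_{\pi}(L\setminus K)=0$.
   Context: $(\Omega,\mathcal{F},P)$ is a probability space; $C(S)$ is the set of countable subsets of $S$; $N_A(M)=|A\cap M|$; $\mathcal{C}(\mathcal{S})=\sigma(N_A\mid A\in\mathcal{S})$; a cr-set is an $\mathcal{F}$-$\mathcal{C}(\mathcal{S})$ measurable map $\pi:\Omega\to C(S)$, finite if its values are finite; a map $\tau:\Omega\to C(S)$ is constructive if $\tau(\omega)=\bigcup_k\pi_k(\omega)$ for all $\omega$ for some finite cr-sets $\pi_k$, $k\in\mathbb{N}$. The hitting function is $T_\pi(A)=P(\pi\cap A\neq\emptyset)$, $A\in\mathcal{S}$. For a nonempty family $\mathcal{E}$: $\mathcal{E}_\sigma$ (resp. $\mathcal{E}_\delta$) is the family of countable unions (resp. intersections) of $\mathcal{E}$-sets, the empty union/intersection not included; $\mathcal{E}_{ext}=\mathcal{E}_\sigma$; $\mathcal{E}_{int}=\{\bigcap_n (S\setminus E_n)\mid E_n\in\mathcal{E}\}$. *)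

theory Defs
  imports "HOL-Probability.Probability"
begin

definition csets :: "'a set \<Rightarrow> 'a set set" where
  "csets S = {X. X \<subseteq> S \<and> countable X}"

definition Ncount :: "'a set \<Rightarrow> 'a set \<Rightarrow> enat" where
  "Ncount A X = (if finite (A \<inter> X) then enat (card (A \<inter> X)) else \<infinity>)"

definition cr_space :: "'a measure \<Rightarrow> 'a set measure" where
  "cr_space M = sigma (csets (space M))
     {Ncount A -` B \<inter> csets (space M) | A B. A \<in> sets M}"

definition cr_set :: "'w measure \<Rightarrow> 'a measure \<Rightarrow> ('w \<Rightarrow> 'a set) \<Rightarrow> bool" where
  "cr_set P M \<pi> \<longleftrightarrow> \<pi> \<in> measurable P (cr_space M)"

definition finite_cr_set :: "'w measure \<Rightarrow> 'a measure \<Rightarrow> ('w \<Rightarrow> 'a set) \<Rightarrow> bool" where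
  "finite_cr_set P M \<pi> \<longleftrightarrow> cr_set P M \<pi> \<and> (\<forall>\<omega>\<in>space P. finite (\<pi> \<omega>))"

definition constructive :: "'w measure \<Rightarrow> 'a measure \<Rightarrow> ('w \<Rightarrow> 'a set) \<Rightarrow> bool" where
  "constructive P M \<tau> \<longleftrightarrow>
     (\<exists>\<pi>s :: nat \<Rightarrow> 'w \<Rightarrow> 'a set. (\<forall>k. finite_cr_set P M (\<pi>s k)) \<and>
        (\<forall>\<omega>\<in>space P. \<tau> \<omega> = (\<Union>k. \<pi>s k \<omega>)))"

definition hitting :: "'w measure \<Rightarrow> ('w \<Rightarrow> 'a set) \<Rightarrow> 'a set \<Rightarrow> real" where
  "hitting P \<pi> A = measure P {\<omega> \<in> space P. \<pi> \<omega> \<inter> A \<noteq> {}}"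

definition sigma_fam :: "'a set set \<Rightarrow> 'a set set" where
  "sigma_fam E = {\<Union>F | F. F \<noteq> {} \<and> countable F \<and> F \<subseteq> E}"

definition delta_fam :: "'a set set \<Rightarrow> 'a set set" where
  "delta_fam E = {\<Inter>F | F. F \<noteq> {} \<and> countable F \<and> F \<subseteq> E}"

definition ext_fam :: "'a set set \<Rightarrow> 'a set set" where
  "ext_fam E = sigma_fam E"

definition int_fam :: "'a set \<Rightarrow> 'a set set \<Rightarrow> 'a set set" where
  "int_fam S E = {\<Inter>n. S - En n | En. \<forall>n::nat. En n \<in> E}"

end

theory Submission
  imports Defs
begin

(* Fix a measurable set A.  For a FINITE random set rho, the hitting
   functional B |-> T_rho(B) is a monotone, subadditive set function that vanishes at {},
   is countably subadditive, and -- because the values of rho are finite -- tends to 0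
   along every decreasing sequence of measurable sets with empty intersection.
   By induction over the generated sigma-algebra this yields, for every epsilon > 0, an
   inner set I in E_int and an outer set U in E_sigma with I <= A <= U and
   T_rho(U - I) < epsilon (lemma approximable_sets).
   A constructive cr-set pi is the increasing union of the finite random sets
   rho_N = pi_0 u ... u pi_N.  Approximating A for rho_N with precision 1/(N+1) and taking
   K = U_N I_N and L = Inter_N U_N gives T_rho_N(L - K) = 0 for every N
   (lemma sandwich), hence T_pi(L - K) = 0 by countable subadditivity. *)

lemma sigma_famI:
  "F \<noteq> {} \<Longrightarrow> countable F \<Longrightarrow> F \<subseteq> E \<Longrightarrow> X = \<Union>F \<Longrightarrow> X \<in> sigma_fam E"
  unfolding sigma_fam_def by blast

lemma delta_famI:
  "F \<noteq> {} \<Longrightarrow> countable F \<Longrightarrow> F \<subseteq> E \<Longrightarrow> X = \<Inter>F \<Longrightarrow> X \<in> delta_fam E"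
  unfolding delta_fam_def by blast

lemma int_famI: "(\<And>n::nat. En n \<in> E) \<Longrightarrow> X = (\<Inter>n. S - En n) \<Longrightarrow> X \<in> int_fam S E"
  unfolding int_fam_def by blast

lemma int_famE:
  assumes "X \<in> int_fam S E"
  obtains En :: "nat \<Rightarrow> 'a set" where "\<And>n. En n \<in> E" "X = (\<Inter>n. S - En n)"
  using assms unfolding int_fam_def by blast

text \<open>A member of sigma_fam is the union of a sequence of generators
  (nonempty countable families can be enumerated with repetitions).\<close>

lemma sigma_fam_iff: "X \<in> sigma_fam E \<longleftrightarrow> (\<exists>f::nat \<Rightarrow> _. range f \<subseteq> E \<and> X = \<Union>(range f))"
proof
  assume "X \<in> sigma_fam E"
  then obtain F where F: "F \<noteq> {}" "countable F" "F \<subseteq> E" "X = \<Union>F"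
    unfolding sigma_fam_def by blast
  then show "\<exists>f::nat \<Rightarrow> _. range f \<subseteq> E \<and> X = \<Union>(range f)"
    using range_from_nat_into[OF F(1,2)] by metis
next
  assume "\<exists>f::nat \<Rightarrow> _. range f \<subseteq> E \<and> X = \<Union>(range f)"
  then obtain f :: "nat \<Rightarrow> _" where "range f \<subseteq> E" "X = \<Union>(range f)" by blast
  then show "X \<in> sigma_fam E" by (intro sigma_famI[where F="range f"]) auto
qed

lemma sigma_fam_UN:
  assumes "\<And>n::nat. X n \<in> sigma_fam E"
  shows "(\<Union>n. X n) \<in> sigma_fam E"
proof -
  obtain f :: "nat \<Rightarrow> nat \<Rightarrow> _" where f: "\<And>n. range (f n) \<subseteq> E" "\<And>n. X n = \<Union>(range (f n))"
    using assms[unfolded sigma_fam_iff] by metis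
  have "(\<Union>n. X n) = \<Union>(\<Union>n. range (f n))" using f(2) by auto
  then show ?thesis
    using f(1) by (intro sigma_famI[where F="\<Union>n. range (f n)"]) (auto simp: image_subset_iff)
qed

lemma sigma_fam_sets:
  assumes "F \<subseteq> sets M" "X \<in> sigma_fam F"
  shows "X \<in> sets M"
proof -
  obtain G where "countable G" "G \<subseteq> F" "X = \<Union>G"
    using assms(2) unfolding sigma_fam_def by blast
  then show ?thesis using assms(1) sets.countable_Union[of G] by blast
qed

lemma delta_fam_sets:
  assumes "F \<subseteq> sets M" "X \<in> delta_fam F"
  shows "X \<in> sets M"
proof -
  obtain G where "G \<noteq> {}" "countable G" "G \<subseteq> F" "X = \<Inter>G"
    using assms(2) unfolding delta_fam_def by blast
  then show ?thesis using assms(1) sets.countable_INT'[of G "\<lambda>x. x"] by auto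
qed

text \<open>For an intersection-stable E, the family int_fam is stable under finite
  unions: the union of the intersections of the complements of a_i and of b_j is the
  intersection of the complements of a_i \<inter> b_j, indexed over all pairs (i, j).\<close>

lemma int_fam_Un:
  assumes X: "X \<in> int_fam S E" and Y: "Y \<in> int_fam S E"
    and Int_stable: "\<And>a b. a \<in> E \<Longrightarrow> b \<in> E \<Longrightarrow> a \<inter> b \<in> E"
  shows "X \<union> Y \<in> int_fam S E"
proof -
  obtain a b :: "nat \<Rightarrow> _" where a: "\<And>n. a n \<in> E" "X = (\<Inter>n. S - a n)"
    and b: "\<And>n. b n \<in> E" "Y = (\<Inter>n. S - b n)"
    using X Y by (metis int_famE)
  define c where "c n = a (fst (prod_decode n)) \<inter> b (snd (prod_decode n))" for n
  have "X \<union> Y = (\<Inter>n. S - c n)"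
  proof
    show "X \<union> Y \<subseteq> (\<Inter>n. S - c n)" unfolding a b c_def by blast
    show "(\<Inter>n. S - c n) \<subseteq> X \<union> Y"
    proof
      fix x assume x: "x \<in> (\<Inter>n. S - c n)"
      show "x \<in> X \<union> Y"
      proof (rule ccontr)
        assume "x \<notin> X \<union> Y"
        with x obtain i j where "x \<in> a i" "x \<in> b j" unfolding a b by blast
        then have "x \<in> c (prod_encode (i, j))" unfolding c_def by simp
        with x show False by blast
      qed
    qed
  qed
  moreover have "c n \<in> E" for n unfolding c_def using a b Int_stable by simp
  ultimately show ?thesis by (intro int_famI[where En=c])
qed

lemma int_fam_UN_atMost:
  assumes "\<And>a b. a \<in> E \<Longrightarrow> b \<in> E \<Longrightarrow> a \<inter> b \<in> E"
    and "\<And>n. f n \<in> int_fam S E"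
  shows "(\<Union>n\<le>(N::nat). f n) \<in> int_fam S E"
proof (induction N)
  case (Suc N)
  then show ?case using int_fam_Un[OF Suc assms(2) assms(1)] by (simp add: atMost_Suc Un_commute)
qed (use assms in simp)

lemma finite_meets_decseq:
  assumes "finite R" "decseq B" "\<And>n::nat. R \<inter> B n \<noteq> {}"
  shows "R \<inter> (\<Inter>n. B n) \<noteq> {}"
proof
  assume "R \<inter> (\<Inter>n. B n) = {}"
  then obtain g where g: "\<And>x. x \<in> R \<Longrightarrow> x \<notin> B (g x)" by (metis INT_I IntI empty_iff)
  define N where "N = Max (g ` R)"
  have "B N \<subseteq> B (g x)" if "x \<in> R" for x
    using \<open>decseq B\<close> \<open>finite R\<close> that unfolding N_def decseq_def by simp
  then have "R \<inter> B N = {}" using g by blast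
  with assms(3) show False by blast
qed

locale inner_generator =
  fixes M :: "'a measure" and E :: "'a set set"
  assumes E_Pow: "E \<subseteq> Pow (space M)"
    and Int_stable: "\<And>a b. a \<in> E \<Longrightarrow> b \<in> E \<Longrightarrow> a \<inter> b \<in> E"
    and generates: "sets M = sigma_sets (space M) E"
    and empty_in_E: "{} \<in> E"
    and E_inner: "E \<subseteq> sigma_fam (int_fam (space M) E)"
begin

lemma E_sets: "E \<subseteq> sets M"
  using generates by auto

lemma int_fam_sets:
  assumes "X \<in> int_fam (space M) E"
  shows "X \<in> sets M"
proof -
  obtain En :: "nat \<Rightarrow> 'a set" where En: "\<And>n. En n \<in> E" "X = (\<Inter>n. space M - En n)"
    using int_famE[OF assms] by metis
  then have "X = space M - (\<Union>n. En n)" by blast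
  moreover have "(\<Union>n. En n) \<in> sets M" using E_sets En(1) by (intro sets.countable_UN) blast
  ultimately show ?thesis by simp
qed

lemma outer_sets: "X \<in> sigma_fam E \<Longrightarrow> X \<in> sets M"
  using sigma_fam_sets[OF E_sets] .

lemma E_outer: "a \<in> E \<Longrightarrow> a \<in> sigma_fam E"
  by (rule sigma_famI[where F="{a}"]) auto

lemma inner_outer_sets:
  assumes "K \<in> sigma_fam (int_fam (space M) E)" "L \<in> delta_fam (ext_fam E)"
  shows "L \<in> sets M" "K \<in> sets M"
proof -
  show "L \<in> sets M"
    using outer_sets assms(2) unfolding ext_fam_def by (intro delta_fam_sets[where F="sigma_fam E"]) auto
  show "K \<in> sets M"
    using int_fam_sets assms(1) by (intro sigma_fam_sets[where F="int_fam (space M) E"]) auto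
qed

lemma compl_outer:
  assumes "U \<in> sigma_fam E"
  shows "space M - U \<in> int_fam (space M) E"
proof -
  obtain f :: "nat \<Rightarrow> 'a set" where "range f \<subseteq> E" "U = \<Union>(range f)"
    using assms unfolding sigma_fam_iff by blast
  then show ?thesis by (intro int_famI[where En=f]) auto
qed

lemma compl_inner:
  assumes "I \<in> int_fam (space M) E"
  shows "space M - I \<in> sigma_fam E"
proof -
  obtain b :: "nat \<Rightarrow> 'a set" where b: "\<And>n. b n \<in> E" "I = (\<Inter>n. space M - b n)"
    using int_famE[OF assms] by metis
  moreover have "b n \<subseteq> space M" for n using E_Pow b(1) by blast
  ultimately have "space M - I = \<Union>(range b)" by blast
  then show ?thesis
    unfolding sigma_fam_iff using b(1) by (intro exI[where x=b]) auto
qed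

lemma empty_inner: "{} \<in> int_fam (space M) E"
proof -
  have "{} \<in> sigma_fam (int_fam (space M) E)" using E_inner empty_in_E by (rule subsetD)
  then obtain f :: "nat \<Rightarrow> 'a set" where f: "range f \<subseteq> int_fam (space M) E" "{} = \<Union>(range f)"
    unfolding sigma_fam_iff by blast
  have "f 0 \<subseteq> \<Union>(range f)" by blast
  then have "f 0 = {}" using f(2) by simp
  then show ?thesis using f(1) by (metis rangeI subsetD)
qed

end

locale finite_random_set = prob_space P for P :: "'w measure" +
  fixes M :: "'a measure" and \<rho> :: "'w \<Rightarrow> 'a set"
  assumes finite_values: "\<And>\<omega>. \<omega> \<in> space P \<Longrightarrow> finite (\<rho> \<omega>)"
    and hitting_event: "\<And>B. B \<in> sets M \<Longrightarrow> {\<omega> \<in> space P. \<rho> \<omega> \<inter> B \<noteq> {}} \<in> sets P"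
begin

lemma hitting_mono: "B \<subseteq> B' \<Longrightarrow> B' \<in> sets M \<Longrightarrow> hitting P \<rho> B \<le> hitting P \<rho> B'"
  unfolding hitting_def by (rule finite_measure_mono) (auto intro: hitting_event)

lemma hitting_Un_le:
  assumes "B \<in> sets M" "B' \<in> sets M"
  shows "hitting P \<rho> (B \<union> B') \<le> hitting P \<rho> B + hitting P \<rho> B'"
proof -
  have "{\<omega> \<in> space P. \<rho> \<omega> \<inter> (B \<union> B') \<noteq> {}} =
        {\<omega> \<in> space P. \<rho> \<omega> \<inter> B \<noteq> {}} \<union> {\<omega> \<in> space P. \<rho> \<omega> \<inter> B' \<noteq> {}}"
    by blast
  then show ?thesis
    unfolding hitting_def using measure_Un_le[OF hitting_event hitting_event] assms by simp
qed

text \<open>Continuity at the empty set along decreasing sequences; this is where the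
  finiteness of the values is used.\<close>

lemma hitting_decseq_tendsto_0:
  assumes B: "\<And>n::nat. B n \<in> sets M" "decseq B" "(\<Inter>n. B n) = {}"
  shows "(\<lambda>n. hitting P \<rho> (B n)) \<longlonglongrightarrow> 0"
proof -
  let ?ev = "\<lambda>n. {\<omega> \<in> space P. \<rho> \<omega> \<inter> B n \<noteq> {}}"
  have "(\<Inter>n. ?ev n) = {}"
  proof (rule ccontr)
    assume "(\<Inter>n. ?ev n) \<noteq> {}"
    then obtain \<omega> where "\<omega> \<in> space P" "\<And>n. \<rho> \<omega> \<inter> B n \<noteq> {}" by auto
    then show False using finite_meets_decseq[OF finite_values B(2)] B(3) by blast
  qed
  moreover have "decseq ?ev" using B(2) unfolding decseq_def by blast
  then have "(\<lambda>n. measure P (?ev n)) \<longlonglongrightarrow> measure P (\<Inter>n. ?ev n)"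
    using B(1) hitting_event by (intro finite_Lim_measure_decseq) auto
  ultimately show ?thesis unfolding hitting_def by simp
qed

lemma hitting_UN_le:
  assumes B: "\<And>n::nat. B n \<in> sets M" and bound: "\<And>n. hitting P \<rho> (B n) \<le> \<delta> n"
    and "summable \<delta>"
  shows "hitting P \<rho> (\<Union>n. B n) \<le> suminf \<delta>"
proof -
  have summable: "summable (\<lambda>n. hitting P \<rho> (B n))"
    using bound by (intro summable_comparison_test'[OF \<open>summable \<delta>\<close>]) (simp add: hitting_def)
  have "{\<omega> \<in> space P. \<rho> \<omega> \<inter> (\<Union>n. B n) \<noteq> {}} = (\<Union>n. {\<omega> \<in> space P. \<rho> \<omega> \<inter> B n \<noteq> {}})"
    by blast
  then have "hitting P \<rho> (\<Union>n. B n) \<le> (\<Sum>n. hitting P \<rho> (B n))"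
    unfolding hitting_def using summable[unfolded hitting_def] B
    by (auto intro!: finite_measure_subadditive_countably hitting_event)
  also have "\<dots> \<le> suminf \<delta>" by (rule suminf_le[OF bound summable \<open>summable \<delta>\<close>])
  finally show ?thesis .
qed

lemma hitting_UN_le_geometric:
  assumes B: "\<And>n::nat. B n \<in> sets M" and bound: "\<And>n. hitting P \<rho> (B n) \<le> c * (1/2) ^ n"
  shows "hitting P \<rho> (\<Union>n. B n) \<le> 2 * c"
proof -
  have "summable (\<lambda>n. c * (1/2 :: real) ^ n)"
    by (intro summable_mult summable_geometric) simp
  moreover have "(\<Sum>n. c * (1/2 :: real) ^ n) = 2 * c"
    by (subst suminf_mult) (simp_all add: suminf_geometric summable_geometric)
  ultimately show ?thesis
    using hitting_UN_le[where B=B and \<delta>="\<lambda>n. c * (1/2) ^ n", OF B bound] by simp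
qed

end

definition approximable :: "'w measure \<Rightarrow> ('w \<Rightarrow> 'a set) \<Rightarrow> 'a set \<Rightarrow> 'a set set \<Rightarrow> 'a set \<Rightarrow> bool"
  where "approximable P \<rho> S E A \<longleftrightarrow>
    (\<forall>\<epsilon>>0. \<exists>I\<in>int_fam S E. \<exists>U\<in>sigma_fam E. I \<subseteq> A \<and> A \<subseteq> U \<and> hitting P \<rho> (U - I) < \<epsilon>)"

lemma approximableI:
  assumes "\<And>\<epsilon>. \<epsilon> > 0 \<Longrightarrow> \<exists>I\<in>int_fam S E. \<exists>U\<in>sigma_fam E. I \<subseteq> A \<and> A \<subseteq> U \<and> hitting P \<rho> (U - I) < \<epsilon>"
  shows "approximable P \<rho> S E A"
  using assms unfolding approximable_def by blast

lemma approximableD: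
  assumes "approximable P \<rho> S E A" "\<epsilon> > 0"
  obtains I U where "I \<in> int_fam S E" "U \<in> sigma_fam E" "I \<subseteq> A" "A \<subseteq> U" "hitting P \<rho> (U - I) < \<epsilon>"
  using assms unfolding approximable_def by blast

lemma approximable_seq:
  assumes approx: "\<And>n::nat. approximable P (\<rho> n) S E (A n)" and pos: "\<And>n. \<epsilon> n > 0"
  obtains I U where "\<And>n. I n \<in> int_fam S E" "\<And>n. U n \<in> sigma_fam E" "\<And>n. I n \<subseteq> A n"
    "\<And>n. A n \<subseteq> U n" "\<And>n. hitting P (\<rho> n) (U n - I n) < \<epsilon> n"
proof -
  have "\<exists>I U. I \<in> int_fam S E \<and> U \<in> sigma_fam E \<and> I \<subseteq> A n \<and> A n \<subseteq> U \<and>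
      hitting P (\<rho> n) (U - I) < \<epsilon> n" for n
    by (rule approximableD[OF approx pos]) blast
  then show ?thesis using that by metis
qed

locale hitting_approximation = finite_random_set P M \<rho> + inner_generator M E
  for P :: "'w measure" and M :: "'a measure" and \<rho> :: "'w \<Rightarrow> 'a set" and E :: "'a set set"
begin

lemma inner_exhaustion:
  fixes f :: "nat \<Rightarrow> 'a set"
  assumes f: "\<And>n. f n \<in> int_fam (space M) E" and "\<epsilon> > 0"
  obtains N :: nat where "(\<Union>n\<le>N. f n) \<in> int_fam (space M) E"
    "hitting P \<rho> ((\<Union>n. f n) - (\<Union>n\<le>N. f n)) < \<epsilon>"
proof -
  have f_sets: "f n \<in> sets M" for n using int_fam_sets[OF f] .
  have "(\<lambda>N. hitting P \<rho> ((\<Union>n. f n) - (\<Union>n\<le>N. f n))) \<longlonglongrightarrow> 0"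
    using f_sets by (intro hitting_decseq_tendsto_0) (auto simp: decseq_def)
  then have "eventually (\<lambda>N. hitting P \<rho> ((\<Union>n. f n) - (\<Union>n\<le>N. f n)) < \<epsilon>) sequentially"
    using \<open>\<epsilon> > 0\<close> by (rule order_tendstoD(2))
  then obtain N where "hitting P \<rho> ((\<Union>n. f n) - (\<Union>n\<le>N. f n)) < \<epsilon>"
    unfolding eventually_sequentially by blast
  moreover have "(\<Union>n\<le>N. f n) \<in> int_fam (space M) E"
    by (rule int_fam_UN_atMost[OF Int_stable f])
  ultimately show ?thesis using that by blast
qed

lemma approximable_generator:
  assumes "a \<in> E"
  shows "approximable P \<rho> (space M) E a"
proof (rule approximableI)
  fix \<epsilon> :: real assume "\<epsilon> > 0"
  have "a \<in> sigma_fam (int_fam (space M) E)" using E_inner assms by (rule subsetD)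
  then obtain f :: "nat \<Rightarrow> 'a set" where "range f \<subseteq> int_fam (space M) E" and a: "a = (\<Union>n. f n)"
    unfolding sigma_fam_iff by blast
  then have f: "f n \<in> int_fam (space M) E" for n by (simp add: image_subset_iff)
  obtain N where J: "(\<Union>n\<le>N. f n) \<in> int_fam (space M) E"
    and small: "hitting P \<rho> (a - (\<Union>n\<le>N. f n)) < \<epsilon>"
    unfolding a by (rule inner_exhaustion[OF f \<open>\<epsilon> > 0\<close>])
  have "(\<Union>n\<le>N. f n) \<subseteq> a" unfolding a by (rule UN_mono) simp_all
  with small show "\<exists>I\<in>int_fam (space M) E. \<exists>U\<in>sigma_fam E. I \<subseteq> a \<and> a \<subseteq> U \<and> hitting P \<rho> (U - I) < \<epsilon>"
    by (intro bexI[OF _ J] bexI[OF _ E_outer[OF assms]]) simp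
qed

lemma approximable_empty: "approximable P \<rho> (space M) E {}"
proof (rule approximableI)
  fix \<epsilon> :: real assume "\<epsilon> > 0"
  then show "\<exists>I\<in>int_fam (space M) E. \<exists>U\<in>sigma_fam E. I \<subseteq> {} \<and> {} \<subseteq> U \<and> hitting P \<rho> (U - I) < \<epsilon>"
    using empty_inner E_outer[OF empty_in_E] by (intro bexI[of _ "{}"]) (auto simp: hitting_def)
qed

lemma approximable_compl:
  assumes "approximable P \<rho> (space M) E a"
  shows "approximable P \<rho> (space M) E (space M - a)"
proof (rule approximableI)
  fix \<epsilon> :: real assume "\<epsilon> > 0"
  obtain I U where IU: "I \<in> int_fam (space M) E" "U \<in> sigma_fam E" "I \<subseteq> a" "a \<subseteq> U"
    "hitting P \<rho> (U - I) < \<epsilon>"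
    using assms \<open>\<epsilon> > 0\<close> by (rule approximableD)
  have "(space M - I) - (space M - U) \<subseteq> U - I" by blast
  moreover have "U - I \<in> sets M" using outer_sets[OF IU(2)] int_fam_sets[OF IU(1)] by (rule sets.Diff)
  ultimately have "hitting P \<rho> ((space M - I) - (space M - U)) \<le> hitting P \<rho> (U - I)"
    by (rule hitting_mono)
  then have "hitting P \<rho> ((space M - I) - (space M - U)) < \<epsilon>" using IU(5) by linarith
  moreover have "space M - U \<subseteq> space M - a" "space M - a \<subseteq> space M - I" using IU(3,4) by auto
  ultimately show "\<exists>I'\<in>int_fam (space M) E. \<exists>U'\<in>sigma_fam E.
      I' \<subseteq> space M - a \<and> space M - a \<subseteq> U' \<and> hitting P \<rho> (U' - I') < \<epsilon>"
    using compl_outer[OF IU(2)] compl_inner[OF IU(1)] by blast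
qed

text \<open>Countable unions: approximate the n-th set with precision \<epsilon>/4 \<cdot> 2^-n, take the union
  of the outer sets and a finite partial union of the inner sets.  The error is at most
  \<epsilon>/2 for the outer approximation plus \<epsilon>/2 for truncating the union of inner sets.\<close>

lemma approximable_UN:
  assumes approx: "\<And>n::nat. approximable P \<rho> (space M) E (a n)"
  shows "approximable P \<rho> (space M) E (\<Union>n. a n)"
proof (rule approximableI)
  fix \<epsilon> :: real assume "\<epsilon> > 0"
  then have pos: "\<epsilon> / 4 * (1/2) ^ n > 0" for n :: nat by simp
  obtain I U where IU: "\<And>n. I n \<in> int_fam (space M) E" "\<And>n. U n \<in> sigma_fam E"
    "\<And>n. I n \<subseteq> a n" "\<And>n. a n \<subseteq> U n" "\<And>n. hitting P \<rho> (U n - I n) < \<epsilon> / 4 * (1/2) ^ n"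
    by (rule approximable_seq[where \<rho>="\<lambda>_. \<rho>" and A=a and \<epsilon>="\<lambda>n. \<epsilon> / 4 * (1/2) ^ n",
          OF approx pos]) (rule that)
  have "\<epsilon> / 2 > 0" using \<open>\<epsilon> > 0\<close> by simp
  then obtain N where J: "(\<Union>n\<le>N. I n) \<in> int_fam (space M) E"
    and small_inner: "hitting P \<rho> ((\<Union>n. I n) - (\<Union>n\<le>N. I n)) < \<epsilon> / 2"
    by (rule inner_exhaustion[OF IU(1)])
  have diff_sets: "U n - I n \<in> sets M" for n
    using outer_sets[OF IU(2)] int_fam_sets[OF IU(1)] by (rule sets.Diff)
  have "hitting P \<rho> (\<Union>n. U n - I n) \<le> 2 * (\<epsilon> / 4)"
    using diff_sets less_imp_le[OF IU(5)] by (rule hitting_UN_le_geometric[where B="\<lambda>n. U n - I n"])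
  then have small_outer: "hitting P \<rho> (\<Union>n. U n - I n) \<le> \<epsilon> / 2" by simp
  have errors_sets: "(\<Union>n. U n - I n) \<in> sets M"
    using diff_sets by (intro sets.countable_UN) blast
  have "(\<Union>n. I n) \<in> sets M"
    using int_fam_sets[OF IU(1)] by (intro sets.countable_UN) blast
  then have remainder_sets: "(\<Union>n. I n) - (\<Union>n\<le>N. I n) \<in> sets M"
    using int_fam_sets[OF J] by (rule sets.Diff)
  have "hitting P \<rho> ((\<Union>n. U n) - (\<Union>n\<le>N. I n))
      \<le> hitting P \<rho> ((\<Union>n. U n - I n) \<union> ((\<Union>n. I n) - (\<Union>n\<le>N. I n)))"
    by (rule hitting_mono[OF _ sets.Un[OF errors_sets remainder_sets]]) blast
  also have "\<dots> \<le> hitting P \<rho> (\<Union>n. U n - I n) + hitting P \<rho> ((\<Union>n. I n) - (\<Union>n\<le>N. I n))"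
    by (rule hitting_Un_le[OF errors_sets remainder_sets])
  also have "\<dots> < \<epsilon>" using small_inner small_outer by linarith
  finally have small: "hitting P \<rho> ((\<Union>n. U n) - (\<Union>n\<le>N. I n)) < \<epsilon>" .
  have "(\<Union>n\<le>N. I n) \<subseteq> (\<Union>n. a n)" "(\<Union>n. a n) \<subseteq> (\<Union>n. U n)" using IU(3,4) by blast+
  with small show "\<exists>I\<in>int_fam (space M) E. \<exists>U\<in>sigma_fam E.
      I \<subseteq> (\<Union>n. a n) \<and> (\<Union>n. a n) \<subseteq> U \<and> hitting P \<rho> (U - I) < \<epsilon>"
    by (intro bexI[OF _ J] bexI[OF _ sigma_fam_UN[OF IU(2)]]) simp
qed

lemma approximable_sets:
  assumes "A \<in> sets M"
  shows "approximable P \<rho> (space M) E A"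
proof -
  have "A \<in> sigma_sets (space M) E" using assms generates by simp
  then show ?thesis
  proof induction
    case (Basic a)
    show ?case by (rule approximable_generator[OF Basic.hyps])
  next
    case Empty
    show ?case by (rule approximable_empty)
  next
    case (Compl a)
    show ?case by (rule approximable_compl[OF Compl.IH])
  next
    case (Union a)
    show ?case by (rule approximable_UN[OF Union.IH])
  qed
qed

end

text \<open>The hitting event of a cr-set is an event: its complement is the preimage of the
  generator of the sigma-algebra on C(S) given by the count N_B taking the value 0.\<close>

lemma Ncount_eq_0_iff: "Ncount B X = 0 \<longleftrightarrow> B \<inter> X = {}"
  unfolding Ncount_def by (auto simp: zero_enat_def)

lemma cr_set_hitting_event:
  assumes "cr_set P M \<pi>" and B: "B \<in> sets M"
  shows "{\<omega> \<in> space P. \<pi> \<omega> \<inter> B \<noteq> {}} \<in> sets P"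
proof -
  let ?G = "{Ncount A -` C \<inter> csets (space M) | A C. A \<in> sets M}"
  have G: "?G \<subseteq> Pow (csets (space M))" by blast
  have \<pi>: "\<pi> \<in> measurable P (cr_space M)" using assms(1) unfolding cr_set_def .
  have space_cr: "space (cr_space M) = csets (space M)"
    unfolding cr_space_def using space_measure_of[OF G] .
  have sets_cr: "sets (cr_space M) = sigma_sets (csets (space M)) ?G"
    unfolding cr_space_def using sets_measure_of[OF G] .
  define Z where "Z = Ncount B -` {0} \<inter> csets (space M)"
  have "Z \<in> ?G" unfolding Z_def using B by blast
  then have "Z \<in> sets (cr_space M)" unfolding sets_cr by (rule sigma_sets.Basic)
  then have "space P - (\<pi> -` Z \<inter> space P) \<in> sets P"
    using measurable_sets[OF \<pi>] by blast
  moreover have "\<pi> \<omega> \<in> csets (space M)" if "\<omega> \<in> space P" for \<omega>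
    using measurable_space[OF \<pi> that] space_cr by simp
  then have "space P - (\<pi> -` Z \<inter> space P) = {\<omega> \<in> space P. \<pi> \<omega> \<inter> B \<noteq> {}}"
    by (auto simp: Z_def Ncount_eq_0_iff)
  ultimately show ?thesis by simp
qed

lemma finite_random_set_partial_union:
  fixes \<pi>s :: "nat \<Rightarrow> 'w \<Rightarrow> 'a set" and N :: nat
  assumes "prob_space P" and \<pi>s: "\<And>k. finite_cr_set P M (\<pi>s k)"
  shows "finite_random_set P M (\<lambda>\<omega>. \<Union>k\<le>N. \<pi>s k \<omega>)"
proof -
  have "finite (\<Union>k\<le>N. \<pi>s k \<omega>)" if "\<omega> \<in> space P" for \<omega>
    using \<pi>s that unfolding finite_cr_set_def by simp
  moreover have "{\<omega> \<in> space P. (\<Union>k\<le>N. \<pi>s k \<omega>) \<inter> B \<noteq> {}} \<in> sets P" if "B \<in> sets M" for B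
  proof -
    have "{\<omega> \<in> space P. (\<Union>k\<le>N. \<pi>s k \<omega>) \<inter> B \<noteq> {}} = (\<Union>k\<le>N. {\<omega> \<in> space P. \<pi>s k \<omega> \<inter> B \<noteq> {}})"
      by blast
    also have "\<dots> \<in> sets P"
      using cr_set_hitting_event[OF _ that] \<pi>s unfolding finite_cr_set_def by blast
    finally show ?thesis .
  qed
  ultimately show ?thesis
    using assms(1) unfolding finite_random_set_def finite_random_set_axioms_def by blast
qed

text \<open>If \<pi> is the union of the random sets \<rho> N and none of them hits B, neither does \<pi>
  (almost surely): the hitting event of \<pi> is a countable union of null events.\<close>

lemma hitting_UN_eq_0:
  fixes \<rho> :: "nat \<Rightarrow> 'w \<Rightarrow> 'a set"
  assumes \<rho>: "\<And>N. finite_random_set P M (\<rho> N)" and B: "B \<in> sets M"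
    and \<pi>: "\<And>\<omega>. \<omega> \<in> space P \<Longrightarrow> \<pi> \<omega> = (\<Union>N. \<rho> N \<omega>)"
    and null: "\<And>N. hitting P (\<rho> N) B = 0"
  shows "hitting P \<pi> B = 0"
proof -
  interpret prob_space P using \<rho>[of 0] unfolding finite_random_set_def by blast
  let ?ev = "\<lambda>N. {\<omega> \<in> space P. \<rho> N \<omega> \<inter> B \<noteq> {}}"
  have "{\<omega> \<in> space P. \<pi> \<omega> \<inter> B \<noteq> {}} = (\<Union>N. ?ev N)" using \<pi> by blast
  moreover have "range ?ev \<subseteq> sets P"
    using finite_random_set.hitting_event[OF \<rho> B] by blast
  then have "measure P (\<Union>N. ?ev N) \<le> (\<Sum>N. measure P (?ev N))"
    using null unfolding hitting_def by (intro finite_measure_subadditive_countably) simp_all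
  ultimately have "hitting P \<pi> B \<le> 0" using null unfolding hitting_def by simp
  then show ?thesis using measure_nonneg[of P] unfolding hitting_def by (rule antisym)
qed

lemma (in inner_generator) sandwich:
  fixes \<rho> :: "nat \<Rightarrow> 'w \<Rightarrow> 'a set"
  assumes \<rho>: "\<And>N. finite_random_set P M (\<rho> N)"
    and incr: "\<And>N m \<omega>. N \<le> m \<Longrightarrow> \<rho> N \<omega> \<subseteq> \<rho> m \<omega>"
    and approx: "\<And>N. approximable P (\<rho> N) (space M) E A"
  obtains K L where "K \<in> sigma_fam (int_fam (space M) E)" "L \<in> delta_fam (ext_fam E)"
    "K \<subseteq> A" "A \<subseteq> L" "\<And>N. hitting P (\<rho> N) (L - K) = 0"
proof -
  interpret prob_space P using \<rho>[of 0] unfolding finite_random_set_def by blast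
  obtain I U where IU: "\<And>N. I N \<in> int_fam (space M) E" "\<And>N. U N \<in> sigma_fam E"
    "\<And>N. I N \<subseteq> A" "\<And>N. A \<subseteq> U N" "\<And>N. hitting P (\<rho> N) (U N - I N) < inverse (real (Suc N))"
    by (rule approximable_seq[where \<rho>=\<rho> and A="\<lambda>_. A" and \<epsilon>="\<lambda>N. inverse (real (Suc N))",
          OF approx]) (simp, rule that)
  define K where "K = (\<Union>N. I N)"
  define L where "L = (\<Inter>N. U N)"
  have K: "K \<in> sigma_fam (int_fam (space M) E)"
    unfolding K_def using IU(1) by (intro sigma_famI[where F="range I"]) (simp_all add: image_subset_iff)
  have L: "L \<in> delta_fam (ext_fam E)"
    unfolding L_def ext_fam_def using IU(2)
    by (intro delta_famI[where F="range U"]) (simp_all add: image_subset_iff)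
  have "hitting P (\<rho> N) (L - K) = 0" for N
  proof -
    have "hitting P (\<rho> N) (L - K) \<le> inverse (real (Suc m))" if "N \<le> m" for m
    proof -
      have diff_sets: "U m - I m \<in> sets M" using outer_sets[OF IU(2)] int_fam_sets[OF IU(1)] by (rule sets.Diff)
      have "L \<subseteq> U m" "I m \<subseteq> K" unfolding L_def K_def by blast+
      then have "{\<omega> \<in> space P. \<rho> N \<omega> \<inter> (L - K) \<noteq> {}} \<subseteq> {\<omega> \<in> space P. \<rho> m \<omega> \<inter> (U m - I m) \<noteq> {}}"
        using incr[OF that] by blast
      then have "hitting P (\<rho> N) (L - K) \<le> hitting P (\<rho> m) (U m - I m)"
        unfolding hitting_def
        by (rule finite_measure_mono[OF _ finite_random_set.hitting_event[OF \<rho> diff_sets]])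
      then show ?thesis using IU(5)[of m] by linarith
    qed
    then have "hitting P (\<rho> N) (L - K) \<le> 0"
      by (intro LIMSEQ_le_const[OF LIMSEQ_inverse_real_of_nat]) blast
    then show ?thesis using measure_nonneg[of P] unfolding hitting_def by (rule antisym)
  qed
  moreover have "K \<subseteq> A" "A \<subseteq> L" unfolding K_def L_def using IU(3,4) by blast+
  ultimately show ?thesis using that K L by blast
qed

theorem lemma5p6:
  fixes P :: "'w measure" and M :: "'a measure" and E :: "'a set set"
    and \<pi> :: "'w \<Rightarrow> 'a set"
  assumes "prob_space P"
    and "E \<subseteq> Pow (space M)"
    and "\<And>a b. a \<in> E \<Longrightarrow> b \<in> E \<Longrightarrow> a \<inter> b \<in> E"
    and "sets M = sigma_sets (space M) E"
    and "{} \<in> E"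
    and "E \<subseteq> sigma_fam (int_fam (space M) E)"
    and "cr_set P M \<pi>"
    and "constructive P M \<pi>"
  shows "\<forall>A \<in> sets M. \<exists>K \<in> sigma_fam (int_fam (space M) E).
           \<exists>L \<in> delta_fam (ext_fam E).
             K \<subseteq> A \<and> A \<subseteq> L \<and> hitting P \<pi> (L - K) = 0"
proof
  fix A assume A: "A \<in> sets M"
  have E: "inner_generator M E" using assms(2-6) by unfold_locales
  obtain \<pi>s :: "nat \<Rightarrow> 'w \<Rightarrow> 'a set" where \<pi>s: "\<And>k. finite_cr_set P M (\<pi>s k)"
    and \<pi>_UN: "\<And>\<omega>. \<omega> \<in> space P \<Longrightarrow> \<pi> \<omega> = (\<Union>k. \<pi>s k \<omega>)"
    using assms(8) unfolding constructive_def by blast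
  define \<rho> where "\<rho> N \<omega> = (\<Union>k\<le>N. \<pi>s k \<omega>)" for N \<omega>
  have \<rho>: "finite_random_set P M (\<rho> N)" for N
    unfolding \<rho>_def by (rule finite_random_set_partial_union[OF assms(1) \<pi>s])
  have approx: "approximable P (\<rho> N) (space M) E A" for N
    using \<rho> E A by (intro hitting_approximation.approximable_sets) (simp_all add: hitting_approximation_def)
  have incr: "\<rho> N \<omega> \<subseteq> \<rho> m \<omega>" if "N \<le> m" for N m \<omega>
    unfolding \<rho>_def using that by (intro UN_mono) auto
  obtain K L where KL: "K \<in> sigma_fam (int_fam (space M) E)" "L \<in> delta_fam (ext_fam E)"
    "K \<subseteq> A" "A \<subseteq> L" "\<And>N. hitting P (\<rho> N) (L - K) = 0"
    by (rule inner_generator.sandwich[OF E, where \<rho>=\<rho>]) (use \<rho> incr approx in blast)+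
  have LK: "L - K \<in> sets M"
    using inner_generator.inner_outer_sets[OF E KL(1,2)] by (rule sets.Diff)
  have \<pi>_eq: "\<pi> \<omega> = (\<Union>N. \<rho> N \<omega>)" if "\<omega> \<in> space P" for \<omega>
    unfolding \<pi>_UN[OF that] \<rho>_def by blast
  have "hitting P \<pi> (L - K) = 0"
    by (rule hitting_UN_eq_0[where \<rho>=\<rho>, OF \<rho> LK \<pi>_eq KL(5)])
  with KL show "\<exists>K \<in> sigma_fam (int_fam (space M) E). \<exists>L \<in> delta_fam (ext_fam E).
      K \<subseteq> A \<and> A \<subseteq> L \<and> hitting P \<pi> (L - K) = 0" by blast
qed

end
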